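(* Let $2\le j\le n$ and let $K_j\subset\wedge^j\mathbb{R}^n$ be a proper cone. Suppose there exists a basis $e_1',\ldots,e_n'$ of $\mathbb{R}^n$ such that $K_j\subseteq K_j'$, where $K_j'\subset\wedge^j\mathbb{R}^n$ is an exterior basic cone defined by this basis. Then the set $T(K_j)$, if it is nonempty, is a cone of rank $j$ in $\mathbb{R}^n$.
   Context: A proper cone is a closed convex cone that is pointed and solid. $\wedge^j\mathbb{R}^n$ is the $j$th exterior power of $\mathbb{R}^n$. An exterior basic cone defined by a basis $e_1',\ldots,e_n'$ is a cone in $\wedge^j\mathbb{R}^n$ spanned (as nonnegative linear combinations) by vectors $\sigma_{i_1\ldots i_j}\,(e'_{i_1}\wedge\cdots\wedge e'_{i_j})$, $1\le i_1<\cdots<i_j\le n$, where each sign $\sigma_{i_1\ldots i_j}\in\{1,-1\}$ is fixed. $T(K_j)$ is the closure of the set of all $x_1\in\mathbb{R}^n$ for which there exist $x_2,\ldots,x_j\in\mathbb{R}^n$ with $x_1\wedge\cdots\wedge x_j\in\operatorname{int}(K_j)\cup\operatorname{int}(-K_j)$. A closed subset $T\subset\mathbb{R}^n$ is a cone of rank $k$ if $\alpha x\in T$ for all $x\in T$, $\alpha\in\mathbb{R}$, and $T$ contains at least one $k$-dimensional linear subspace but no linear subspace of dimension greater than $k$. *)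

theory Defs
  imports "HOL-Analysis.Analysis"
begin

text \<open>Model of R^n: the type real^'n, with n = CARD('n); the linear order on 'n
  gives the ordering e_1,...,e_n of coordinates.  Model of the j-th exterior power:
  a subspace of real^('n set); the coordinate of a j-vector at a j-subset I is its
  Pluecker coordinate with respect to the standard basis e_I = e_{i_1} wedge ... wedge e_{i_j}.\<close>

definition det_nat :: "nat \<Rightarrow> (nat \<Rightarrow> nat \<Rightarrow> real) \<Rightarrow> real" where
  "det_nat j M = (\<Sum>p\<in>{p. p permutes {..<j}}. of_int (sign p) * (\<Prod>a<j. M a (p a)))"

definition wedge :: "nat \<Rightarrow> (nat \<Rightarrow> real^'n::{finite,linorder}) \<Rightarrow> real^('n set)" where
  "wedge j x = (\<chi> I. if card I = j
      then det_nat j (\<lambda>a b. x a $ (sorted_list_of_set I ! b)) else 0)"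

definition ext_power :: "nat \<Rightarrow> (real^('n::{finite,linorder} set)) set" where
  "ext_power j = span (range (wedge j :: (nat \<Rightarrow> real^'n::{finite,linorder}) \<Rightarrow> _))"

definition int_in :: "'a::metric_space set \<Rightarrow> 'a set \<Rightarrow> 'a set" where
  "int_in W K = {x\<in>K. \<exists>e>0. \<forall>y\<in>W. dist y x < e \<longrightarrow> y \<in> K}"

definition proper_cone_in :: "'a::real_normed_vector set \<Rightarrow> 'a set \<Rightarrow> bool" where
  "proper_cone_in W K \<longleftrightarrow> K \<subseteq> W \<and> closed K \<and> convex K \<and> cone K
     \<and> K \<inter> uminus ` K \<subseteq> {0} \<and> int_in W K \<noteq> {}"

definition is_basis :: "('n::finite \<Rightarrow> real^'n) \<Rightarrow> bool" where
  "is_basis e \<longleftrightarrow> inj e \<and> independent (range e)"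

definition ext_basic_cone ::
  "nat \<Rightarrow> ('n \<Rightarrow> real^'n::{finite,linorder}) \<Rightarrow> ('n set \<Rightarrow> real) \<Rightarrow> (real^('n::{finite,linorder} set)) set" where
  "ext_basic_cone j e s =
     {\<Sum>I\<in>{I. card I = j}. c I *\<^sub>R (s I *\<^sub>R wedge j (\<lambda>a. e (sorted_list_of_set I ! a)))
        | c. \<forall>I. c I \<ge> 0}"

definition is_ext_basic_cone :: "nat \<Rightarrow> (real^('n::{finite,linorder} set)) set \<Rightarrow> bool" where
  "is_ext_basic_cone j C \<longleftrightarrow> (\<exists>e s. is_basis e \<and> (\<forall>I. s I \<in> {1, -1}) \<and> C = ext_basic_cone j e s)"

definition T_set :: "nat \<Rightarrow> (real^('n::{finite,linorder} set)) set \<Rightarrow> (real^'n::{finite,linorder}) set" where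
  "T_set j K = closure {x1. \<exists>x. x 0 = x1 \<and>
      wedge j x \<in> int_in (ext_power j) K \<union> int_in (ext_power j) (uminus ` K)}"

definition cone_of_rank :: "nat \<Rightarrow> 'a::euclidean_space set \<Rightarrow> bool" where
  "cone_of_rank k T \<longleftrightarrow> closed T \<and> (\<forall>x\<in>T. \<forall>\<alpha>::real. \<alpha> *\<^sub>R x \<in> T)
     \<and> (\<exists>L. subspace L \<and> dim L = k \<and> L \<subseteq> T)
     \<and> (\<forall>L. subspace L \<and> L \<subseteq> T \<longrightarrow> dim L \<le> k)"

end

theory Submission
  imports Defs "Jordan_Normal_Form.Determinant"
begin

text \<open>Let \<open>S\<close> be the set of first factors \<open>x_0\<close> of the decomposable j-vectors
  \<open>w = x_0 \<and> \<dots> \<and> x_(j-1)\<close> lying in the interior of \<open>K\<close> or of \<open>-K\<close>, so that \<open>T(K)\<close> is the closure of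
  \<open>S\<close>. Replacing \<open>x_0\<close> by \<open>\<Sum> d_i x_i\<close> multiplies \<open>w\<close> by \<open>d_0\<close>; hence \<open>S\<close> is invariant under nonzero
  scalings, and the j-dimensional span of the factors of \<open>w\<close> lies in \<open>T(K)\<close>.

  Conversely, interior points of \<open>K \<subseteq> K'\<close> have strictly positive coefficients with respect to the
  generators \<open>\<sigma>_I e'_I\<close> of \<open>K'\<close>. For \<open>j+1\<close> basis indices \<open>k_0 < \<dots> < k_j\<close> forming \<open>J\<close>, expanding
  along its first row the minor on the columns \<open>J\<close> of the coordinate matrix of \<open>x_0, x_0, \<dots>, x_(j-1)\<close>,
  which has two equal rows, gives \<open>\<Sum>_i (-1)^i e'*_(k_i)(x_0) w_(J-k_i) = 0\<close>, the coefficients \<open>w_I\<close>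
  being the j-minors by Cauchy-Binet. So the numbers \<open>(-1)^i \<sigma>_(J-k_i) e'*_(k_i)(x)\<close> never share a
  strict sign on \<open>S\<close>, nor, by closedness, on \<open>T(K)\<close>. A subspace of dimension greater than j maps
  onto the coordinates indexed by some such \<open>J\<close>, so it contains a vector where all these numbers
  equal 1.\<close>

no_notation Matrix.vec_index (infixl "$" 100)

abbreviation slist :: "'a::linorder set \<Rightarrow> 'a list" where
  "slist \<equiv> sorted_list_of_set"

lemma det_nat_eq_det: "det_nat j M = det (mat j j (\<lambda>(a, b). M a b))"
  unfolding det_nat_def det_def by (simp add: atLeast0LessThan)

lemma det_nat_cong:
  assumes "\<And>a b. a < j \<Longrightarrow> b < j \<Longrightarrow> M a b = N a b"
  shows "det_nat j M = det_nat j N"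
  unfolding det_nat_eq_det by (rule arg_cong[where f = det]) (auto simp: assms)

lemma det_nat_identical_rows:
  assumes "i \<noteq> k" "i < j" "k < j" "\<And>b. b < j \<Longrightarrow> M i b = M k b"
  shows "det_nat j M = 0"
  unfolding det_nat_eq_det
  by (rule det_identical_rows[of _ j i k]) (auto intro!: eq_vecI simp: assms)

lemma det_nat_zero_row:
  assumes "i < j" "\<And>b. b < j \<Longrightarrow> M i b = 0"
  shows "det_nat j M = 0"
  unfolding det_nat_def
proof (rule sum.neutral, intro ballI)
  fix p assume "p \<in> {p. p permutes {..<j}}"
  then have "p i < j" using permutes_in_image assms(1) by fastforce
  then have "(\<Prod>a<j. M a (p a)) = 0" using assms by (intro prod_zero) auto
  then show "of_int (sign p) * (\<Prod>a<j. M a (p a)) = 0" by simp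
qed

lemma det_nat_one: "det_nat j (\<lambda>a b. if a = b then 1 else 0) = 1"
proof -
  have "det_nat j (\<lambda>a b. if a = b then 1 else 0) = det (1\<^sub>m j :: real mat)"
    unfolding det_nat_eq_det one_mat_def by (rule arg_cong[where f = det]) auto
  then show ?thesis by simp
qed

lemma det_nat_permute_rows:
  assumes "p permutes {..<j}"
  shows "det_nat j (\<lambda>a b. N (p a) b) = of_int (sign p) * det_nat j N"
proof -
  have p: "p permutes {0..<j}" using assms by (simp add: atLeast0LessThan)
  have pj: "\<And>i. i < j \<Longrightarrow> p i < j" using permutes_in_image[OF assms] by auto
  have "det_nat j (\<lambda>a b. N (p a) b) = det (mat j j (\<lambda>(i, k). mat j j (\<lambda>(a, b). N a b) $$ (p i, k)))"
    unfolding det_nat_eq_det by (rule arg_cong[where f = det], rule eq_matI) (auto simp: pj)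
  also have "\<dots> = of_int (sign p) * det_nat j N"
    unfolding det_nat_eq_det by (rule det_permute_rows[OF _ p]) auto
  finally show ?thesis .
qed

lemma det_nat_row_linear:
  assumes "i < j" "finite S"
  shows "det_nat j (\<lambda>a b. if a = i then (\<Sum>l\<in>S. g l * N l b) else M a b)
    = (\<Sum>l\<in>S. g l * det_nat j (\<lambda>a b. if a = i then N l b else M a b))"
proof -
  have split_row: "(\<Prod>a<j. F a) = F i * (\<Prod>a\<in>{..<j} - {i}. F a)" for F :: "nat \<Rightarrow> real"
    using assms(1) by (simp add: prod.remove)
  have "det_nat j (\<lambda>a b. if a = i then (\<Sum>l\<in>S. g l * N l b) else M a b)
    = (\<Sum>p | p permutes {..<j}. \<Sum>l\<in>S.
         g l * (of_int (sign p) * (N l (p i) * (\<Prod>a\<in>{..<j} - {i}. M a (p a)))))"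
    unfolding det_nat_def
    by (intro sum.cong refl, subst split_row) (simp add: sum_distrib_left sum_distrib_right mult_ac)
  also have "\<dots> = (\<Sum>l\<in>S. g l * det_nat j (\<lambda>a b. if a = i then N l b else M a b))"
    unfolding det_nat_def sum_distrib_left
    by (subst sum.swap, intro sum.cong refl, subst split_row) simp
  finally show ?thesis .
qed

lemma det_nat_Suc_expand_first_row:
  "det_nat (Suc j) M =
   (\<Sum>a<Suc j. (-1) ^ a * M 0 a * det_nat j (\<lambda>b' a'. M (Suc b') (if a' < a then a' else Suc a')))"
proof -
  let ?A = "mat (Suc j) (Suc j) (\<lambda>(a, b). M a b)"
  have "det ?A = (\<Sum>a<Suc j. ?A $$ (0, a) * cofactor ?A 0 a)"
    by (rule laplace_expansion_row) auto
  also have "\<dots> = (\<Sum>a<Suc j. (-1) ^ a * M 0 a *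
                      det_nat j (\<lambda>b' a'. M (Suc b') (if a' < a then a' else Suc a')))"
  proof (rule sum.cong[OF refl])
    fix a assume a: "a \<in> {..<Suc j}"
    have "mat_delete ?A 0 a = mat j j (\<lambda>(b', a'). M (Suc b') (if a' < a then a' else Suc a'))"
      unfolding mat_delete_def by (rule eq_matI) auto
    then show "?A $$ (0, a) * cofactor ?A 0 a =
        (-1) ^ a * M 0 a * det_nat j (\<lambda>b' a'. M (Suc b') (if a' < a then a' else Suc a'))"
      using a unfolding cofactor_def det_nat_eq_det by simp
  qed
  finally show ?thesis unfolding det_nat_eq_det .
qed

section \<open>The Cauchy-Binet formula\<close>

lemma det_nat_mult_expand:
  fixes X :: "nat \<Rightarrow> 'n::finite \<Rightarrow> real" and Y :: "'n \<Rightarrow> nat \<Rightarrow> real"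
  shows "det_nat j (\<lambda>a b. \<Sum>m\<in>UNIV. X a m * Y m b)
    = (\<Sum>g \<in> {g \<in> {..<j} \<rightarrow>\<^sub>E UNIV. inj_on g {..<j}}.
         (\<Prod>a<j. X a (g a)) * det_nat j (\<lambda>a b. Y (g a) b))"
    (is "_ = (\<Sum>g\<in>_. ?H g)")
proof -
  have "det_nat j (\<lambda>a b. \<Sum>m\<in>UNIV. X a m * Y m b)
      = (\<Sum>p | p permutes {..<j}. \<Sum>g \<in> {..<j} \<rightarrow>\<^sub>E (UNIV :: 'n set).
           of_int (sign p) * ((\<Prod>a<j. X a (g a)) * (\<Prod>a<j. Y (g a) (p a))))"
    unfolding det_nat_def
    by (rule sum.cong[OF refl]) (simp add: prod_sum_PiE sum_distrib_left prod.distrib)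
  also have "\<dots> = (\<Sum>g \<in> {..<j} \<rightarrow>\<^sub>E (UNIV :: 'n set). ?H g)"
    unfolding det_nat_def by (subst sum.swap) (simp add: sum_distrib_left mult_ac)
  also have "\<dots> = (\<Sum>g \<in> {g \<in> {..<j} \<rightarrow>\<^sub>E UNIV. inj_on g {..<j}}. ?H g)"
  proof (rule sum.mono_neutral_right)
    show "\<forall>g \<in> ({..<j} \<rightarrow>\<^sub>E UNIV) - {g \<in> {..<j} \<rightarrow>\<^sub>E UNIV. inj_on g {..<j}}. ?H g = 0"
    proof
      fix g :: "nat \<Rightarrow> 'n" assume "g \<in> ({..<j} \<rightarrow>\<^sub>E UNIV) - {g \<in> {..<j} \<rightarrow>\<^sub>E UNIV. inj_on g {..<j}}"
      then obtain a b where "a < j" "b < j" "a \<noteq> b" "g a = g b"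
        unfolding inj_on_def by auto
      then have "det_nat j (\<lambda>a b. Y (g a) b) = 0"
        by (intro det_nat_identical_rows[of a b]) simp_all
      then show "?H g = 0" by simp
    qed
  qed (auto simp: finite_PiE)
  finally show ?thesis .
qed

lemma nth_sorted_list_of_set_mem: "finite I \<Longrightarrow> i < card I \<Longrightarrow> slist I ! i \<in> I"
  using nth_mem[of i "slist I"] by simp

lemma bij_betw_nth_sorted_list_of_set:
  "finite I \<Longrightarrow> bij_betw ((!) (slist I)) {..<card I} I"
  by (rule bij_betw_nth) auto

text \<open>\<open>a \<mapsto>\<close> the position of \<open>g a\<close> in the sorted list of \<open>g ` {..<j}\<close>.\<close>
definition sorting_perm :: "nat \<Rightarrow> (nat \<Rightarrow> 'a::linorder) \<Rightarrow> nat \<Rightarrow> nat" where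
  "sorting_perm j g a = (if a < j then the_inv_into {..<j} ((!) (slist (g ` {..<j}))) (g a) else a)"

lemma sorting_perm_restrict: "sorting_perm j (restrict g {..<j}) = sorting_perm j g"
  by (auto simp: sorting_perm_def image_restrict_eq fun_eq_iff)

lemma
  assumes "inj_on g {..<j}"
  shows sorting_perm_permutes: "sorting_perm j g permutes {..<j}"
    and nth_sorting_perm: "a < j \<Longrightarrow> slist (g ` {..<j}) ! sorting_perm j g a = g a"
proof -
  have nth_bij: "bij_betw ((!) (slist (g ` {..<j}))) {..<j} (g ` {..<j})"
    using bij_betw_nth_sorted_list_of_set[of "g ` {..<j}"] card_image[OF assms] by simp
  have "bij_betw (the_inv_into {..<j} ((!) (slist (g ` {..<j}))) \<circ> g) {..<j} {..<j}"
    using bij_betw_trans[OF inj_on_imp_bij_betw[OF assms] bij_betw_the_inv_into[OF nth_bij]] .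
  then have "bij_betw (sorting_perm j g) {..<j} {..<j}"
    unfolding sorting_perm_def by (rule bij_betw_cong[THEN iffD1, rotated]) simp
  then show "sorting_perm j g permutes {..<j}"
    by (rule bij_imp_permutes) (simp add: sorting_perm_def)
  show "a < j \<Longrightarrow> slist (g ` {..<j}) ! sorting_perm j g a = g a"
    using f_the_inv_into_f_bij_betw[OF nth_bij, of "g a"] by (simp add: sorting_perm_def)
qed

lemma
  fixes I :: "'a::linorder set"
  assumes I: "finite I" "card I = j" and p: "p permutes {..<j}"
  shows image_nth_permutes: "(\<lambda>a. slist I ! p a) ` {..<j} = I"
    and inj_on_nth_permutes: "inj_on (\<lambda>a. slist I ! p a) {..<j}"
    and sorting_perm_nth_permutes: "sorting_perm j (\<lambda>a. slist I ! p a) = p"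
proof -
  have nth_bij: "bij_betw ((!) (slist I)) {..<j} I"
    using bij_betw_nth_sorted_list_of_set[OF I(1)] I(2) by simp
  have "(\<lambda>a. slist I ! p a) ` {..<j} = (!) (slist I) ` (p ` {..<j})" by (simp add: image_image)
  then show img: "(\<lambda>a. slist I ! p a) ` {..<j} = I"
    using bij_betw_imp_surj_on[OF nth_bij] permutes_image[OF p] by simp
  have "inj_on ((!) (slist I)) (p ` {..<j})"
    using bij_betw_imp_inj_on[OF nth_bij] permutes_image[OF p] by simp
  then show "inj_on (\<lambda>a. slist I ! p a) {..<j}"
    using comp_inj_on[OF permutes_inj_on[OF p]] by (simp add: comp_def)
  show "sorting_perm j (\<lambda>a. slist I ! p a) = p"
  proof
    fix a show "sorting_perm j (\<lambda>a. slist I ! p a) a = p a"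
      using the_inv_into_f_f[OF bij_betw_imp_inj_on[OF nth_bij], of "p a"]
        permutes_in_image[OF p, of a] permutes_not_in[OF p, of a]
      by (auto simp: sorting_perm_def img)
  qed
qed

lemma bij_betw_subsets_permutations_injections:
  "bij_betw (\<lambda>(I, p). restrict (\<lambda>a. slist I ! p a) {..<j})
     (SIGMA I:{I::'n::{finite,linorder} set. card I = j}. {p. p permutes {..<j}})
     {g \<in> {..<j} \<rightarrow>\<^sub>E UNIV. inj_on g {..<j}}"
proof (rule bij_betw_byWitness[where f' = "\<lambda>g. (g ` {..<j}, sorting_perm j g)"])
  show "\<forall>Ip \<in> SIGMA I:{I::'n set. card I = j}. {p. p permutes {..<j}}.
      (\<lambda>g. (g ` {..<j}, sorting_perm j g)) ((\<lambda>(I, p). restrict (\<lambda>a. slist I ! p a) {..<j}) Ip) = Ip"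
  proof
    fix Ip assume "Ip \<in> (SIGMA I:{I::'n set. card I = j}. {p. p permutes {..<j}})"
    then obtain I p where "Ip = (I, p)" "card I = j" "p permutes {..<j}" by auto
    then show "(\<lambda>g. (g ` {..<j}, sorting_perm j g)) ((\<lambda>(I, p). restrict (\<lambda>a. slist I ! p a) {..<j}) Ip) = Ip"
      using image_nth_permutes[of I j p] sorting_perm_nth_permutes[of I j p]
      by (simp add: image_restrict_eq sorting_perm_restrict)
  qed
  show "(\<lambda>(I, p). restrict (\<lambda>a. slist I ! p a) {..<j}) ` (SIGMA I:{I::'n set. card I = j}. {p. p permutes {..<j}})
      \<subseteq> {g \<in> {..<j} \<rightarrow>\<^sub>E UNIV. inj_on g {..<j}}"
  proof
    fix g assume "g \<in> (\<lambda>(I, p). restrict (\<lambda>a. slist I ! p a) {..<j}) ` (SIGMA I:{I::'n set. card I = j}. {p. p permutes {..<j}})"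
    then obtain I p where "g = restrict (\<lambda>a. slist I ! p a) {..<j}" "card I = j" "p permutes {..<j}"
      by auto
    then show "g \<in> {g \<in> {..<j} \<rightarrow>\<^sub>E UNIV. inj_on g {..<j}}"
      using inj_on_nth_permutes[of I j p] by (simp add: inj_on_restrict_eq)
  qed
  show "\<forall>g \<in> {g \<in> {..<j} \<rightarrow>\<^sub>E UNIV. inj_on g {..<j}}.
      (\<lambda>(I, p). restrict (\<lambda>a. slist I ! p a) {..<j}) (g ` {..<j}, sorting_perm j g) = (g :: nat \<Rightarrow> 'n)"
  proof
    fix g :: "nat \<Rightarrow> 'n" assume g: "g \<in> {g \<in> {..<j} \<rightarrow>\<^sub>E UNIV. inj_on g {..<j}}"
    show "(\<lambda>(I, p). restrict (\<lambda>a. slist I ! p a) {..<j}) (g ` {..<j}, sorting_perm j g) = g"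
    proof
      fix a show "(\<lambda>(I, p). restrict (\<lambda>a. slist I ! p a) {..<j}) (g ` {..<j}, sorting_perm j g) a = g a"
      proof (cases "a < j")
        case True
        then show ?thesis using nth_sorting_perm[of g j a] g by simp
      next
        case False
        then show ?thesis using PiE_arb[of g "{..<j}" "\<lambda>_. UNIV" a] g by simp
      qed
    qed
  qed
  show "(\<lambda>g. (g ` {..<j}, sorting_perm j g)) ` {g \<in> {..<j} \<rightarrow>\<^sub>E UNIV. inj_on g {..<j}}
      \<subseteq> (SIGMA I:{I::'n set. card I = j}. {p. p permutes {..<j}})"
  proof
    fix Ip :: "'n set \<times> (nat \<Rightarrow> nat)"
    assume "Ip \<in> (\<lambda>g. (g ` {..<j}, sorting_perm j g)) ` {g \<in> {..<j} \<rightarrow>\<^sub>E UNIV. inj_on g {..<j}}"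
    then obtain g :: "nat \<Rightarrow> 'n" where "Ip = (g ` {..<j}, sorting_perm j g)" "inj_on g {..<j}" by blast
    then show "Ip \<in> (SIGMA I:{I::'n set. card I = j}. {p. p permutes {..<j}})"
      using card_image[of g "{..<j}"] sorting_perm_permutes[of g j] by simp
  qed
qed

theorem cauchy_binet_det_nat:
  fixes X :: "nat \<Rightarrow> 'n::{finite,linorder} \<Rightarrow> real" and Y :: "'n \<Rightarrow> nat \<Rightarrow> real"
  shows "det_nat j (\<lambda>a b. \<Sum>m\<in>UNIV. X a m * Y m b)
     = (\<Sum>I | card I = j. det_nat j (\<lambda>a b. X a (slist I ! b)) * det_nat j (\<lambda>a b. Y (slist I ! a) b))"
proof -
  define H where "H g = (\<Prod>a<j. X a (g a)) * det_nat j (\<lambda>a b. Y (g a) b)" for g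
  have "det_nat j (\<lambda>a b. \<Sum>m\<in>UNIV. X a m * Y m b) = (\<Sum>g \<in> {g \<in> {..<j} \<rightarrow>\<^sub>E UNIV. inj_on g {..<j}}. H g)"
    unfolding det_nat_mult_expand H_def ..
  also have "\<dots> = (\<Sum>Ip \<in> (SIGMA I:{I. card I = j}. {p. p permutes {..<j}}).
                     H ((\<lambda>(I, p). restrict (\<lambda>a. slist I ! p a) {..<j}) Ip))"
    by (rule sum.reindex_bij_betw[symmetric]) (rule bij_betw_subsets_permutations_injections)
  also have "\<dots> = (\<Sum>(I, p) \<in> (SIGMA I:{I. card I = j}. {p. p permutes {..<j}}). H (restrict (\<lambda>a. slist I ! p a) {..<j}))"
    by (simp only: split_def)
  also have "\<dots> = (\<Sum>I | card I = j. \<Sum>p | p permutes {..<j}. H (restrict (\<lambda>a. slist I ! p a) {..<j}))"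
    by (rule sum.Sigma[symmetric]) (auto simp: finite_permutations)
  also have "\<dots> = (\<Sum>I | card I = j. \<Sum>p | p permutes {..<j}.
                     (\<Prod>a<j. X a (slist I ! p a)) * (of_int (sign p) * det_nat j (\<lambda>a b. Y (slist I ! a) b)))"
  proof (intro sum.cong refl)
    fix I :: "'n set" and p assume "p \<in> {p. p permutes {..<j}}"
    then have p: "p permutes {..<j}" by simp
    have "(\<Prod>a<j. X a (restrict (\<lambda>a. slist I ! p a) {..<j} a)) = (\<Prod>a<j. X a (slist I ! p a))"
      by (rule prod.cong) simp_all
    moreover have "det_nat j (\<lambda>a b. Y (restrict (\<lambda>a. slist I ! p a) {..<j} a) b)
        = det_nat j (\<lambda>a b. Y (slist I ! p a) b)"
      by (rule det_nat_cong) simp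
    moreover have "\<dots> = of_int (sign p) * det_nat j (\<lambda>a b. Y (slist I ! a) b)"
      by (rule det_nat_permute_rows[OF p, of "\<lambda>a b. Y (slist I ! a) b"])
    ultimately show "H (restrict (\<lambda>a. slist I ! p a) {..<j})
        = (\<Prod>a<j. X a (slist I ! p a)) * (of_int (sign p) * det_nat j (\<lambda>a b. Y (slist I ! a) b))"
      unfolding H_def by simp
  qed
  also have "\<dots> = (\<Sum>I | card I = j. det_nat j (\<lambda>a b. X a (slist I ! b)) * det_nat j (\<lambda>a b. Y (slist I ! a) b))"
    unfolding det_nat_def by (simp add: sum_distrib_right mult_ac)
  finally show ?thesis .
qed

section \<open>Decomposable j-vectors\<close>

lemma wedge_component:
  "wedge j x $ I = (if card I = j then det_nat j (\<lambda>a b. x a $ (slist I ! b)) else 0)"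
  unfolding wedge_def by simp

lemma wedge_update_lincomb:
  assumes "k < j"
  shows "wedge j (x(k := (\<Sum>i<j. c i *\<^sub>R x i))) = c k *\<^sub>R wedge j x"
proof (rule Finite_Cartesian_Product.vec_eq_iff[THEN iffD2], intro allI)
  fix I :: "'a set"
  show "wedge j (x(k := (\<Sum>i<j. c i *\<^sub>R x i))) $ I = (c k *\<^sub>R wedge j x) $ I"
  proof (cases "card I = j")
    case False then show ?thesis by (simp add: wedge_component)
  next
    case True
    define D where "D i = det_nat j (\<lambda>a b. if a = k then x i $ (slist I ! b) else x a $ (slist I ! b))" for i
    have D_other: "D i = 0" if "i \<in> {..<j} - {k}" for i
      unfolding D_def by (rule det_nat_identical_rows[of k i]) (use that assms in auto)
    have "det_nat j (\<lambda>a b. (x(k := (\<Sum>i<j. c i *\<^sub>R x i))) a $ (slist I ! b))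
       = det_nat j (\<lambda>a b. if a = k then (\<Sum>i<j. c i * x i $ (slist I ! b)) else x a $ (slist I ! b))"
      by (rule det_nat_cong) (simp add: sum_component)
    also have "\<dots> = (\<Sum>i<j. c i * D i)"
      unfolding D_def by (rule det_nat_row_linear[OF assms]) simp
    also have "\<dots> = c k * D k"
      using assms D_other by (simp add: sum.remove)
    also have "D k = det_nat j (\<lambda>a b. x a $ (slist I ! b))"
      unfolding D_def by (rule det_nat_cong) auto
    finally show ?thesis using True by (simp add: wedge_component)
  qed
qed

lemma wedge_update_zero: "k < j \<Longrightarrow> wedge j (x(k := 0)) = 0"
  using wedge_update_lincomb[of k j x "\<lambda>_. 0"] by simp

lemma wedge_update_scale: "k < j \<Longrightarrow> wedge j (x(k := \<alpha> *\<^sub>R x k)) = \<alpha> *\<^sub>R wedge j x"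
  using wedge_update_lincomb[of k j x "\<lambda>i. if i = k then \<alpha> else 0"]
  by (simp add: if_distrib[of "\<lambda>c. c *\<^sub>R _"] cong: if_cong)

lemma inj_on_if_wedge_nonzero:
  assumes "wedge j x \<noteq> 0"
  shows "inj_on x {..<j}"
proof (rule ccontr)
  assume "\<not> inj_on x {..<j}"
  then obtain a b where "a < j" "b < j" "a \<noteq> b" "x a = x b" unfolding inj_on_def by auto
  then have "wedge j x = 0"
    by (intro Finite_Cartesian_Product.vec_eq_iff[THEN iffD2] allI)
      (simp add: wedge_component det_nat_identical_rows[of a b])
  with assms show False by simp
qed

lemma independent_if_wedge_nonzero:
  assumes "wedge j x \<noteq> 0"
  shows "independent (x ` {..<j})"
proof
  assume "dependent (x ` {..<j})"
  then obtain u where u: "\<exists>v \<in> x ` {..<j}. u v \<noteq> 0" "(\<Sum>v \<in> x ` {..<j}. u v *\<^sub>R v) = 0"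
    using dependent_finite[of "x ` {..<j}"] by auto
  have "(\<Sum>i<j. u (x i) *\<^sub>R x i) = 0"
    using u(2) sum.reindex[OF inj_on_if_wedge_nonzero[OF assms], of "\<lambda>v. u v *\<^sub>R v"] by simp
  moreover obtain k where k: "k < j" "u (x k) \<noteq> 0" using u(1) by auto
  ultimately have "u (x k) *\<^sub>R wedge j x = wedge j (x(k := 0))"
    using wedge_update_lincomb[OF k(1), of x "\<lambda>i. u (x i)"] by simp
  also have "\<dots> = 0" by (rule wedge_update_zero[OF k(1)])
  finally show False using k(2) assms by simp
qed

lemma dim_span_if_wedge_nonzero:
  assumes "wedge j x \<noteq> 0"
  shows "dim (span (x ` {..<j})) = j"
  using dim_span_eq_card_independent[OF independent_if_wedge_nonzero[OF assms]]
    card_image[OF inj_on_if_wedge_nonzero[OF assms]] by simp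

lemma wedge_in_ext_power: "wedge j x \<in> ext_power j"
  unfolding ext_power_def by (rule span_base) simp

lemma subspace_ext_power: "subspace (ext_power j)"
  unfolding ext_power_def by (rule subspace_span)

lemma exists_wedge_nonzero:
  assumes "j \<le> CARD('n::{finite,linorder})"
  obtains x :: "nat \<Rightarrow> real^'n::{finite,linorder}" where "wedge j x \<noteq> 0"
proof -
  obtain I :: "'n set" where I: "card I = j"
    using obtain_subset_with_card_n[of j "UNIV :: 'n set"] assms by auto
  define x where "x a = axis (slist I ! a) (1::real)" for a
  have "wedge j x $ I = det_nat j (\<lambda>a b. if a = b then 1 else 0)"
    unfolding wedge_component using I
    by (simp, intro det_nat_cong) (auto simp: x_def axis_def nth_eq_iff_index_eq)
  then have "wedge j x \<noteq> 0" by (auto simp: det_nat_one)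
  then show ?thesis by (rule that)
qed

section \<open>Interiors relative to a subspace\<close>

lemma int_in_scale:
  fixes K W :: "'a::real_normed_vector set"
  assumes "cone K" "subspace W" "0 < c" "v \<in> int_in W K"
  shows "c *\<^sub>R v \<in> int_in W K"
proof -
  obtain e where vK: "v \<in> K" and e: "e > 0" and ball: "\<forall>y\<in>W. dist y v < e \<longrightarrow> y \<in> K"
    using assms(4) unfolding int_in_def by auto
  have "y \<in> K" if y: "y \<in> W" "dist y (c *\<^sub>R v) < c * e" for y
  proof -
    have "inverse c *\<^sub>R y - v = inverse c *\<^sub>R (y - c *\<^sub>R v)"
      using assms(3) by (simp add: algebra_simps)
    then have "dist (inverse c *\<^sub>R y) v = inverse c * dist y (c *\<^sub>R v)"
      using assms(3) by (simp add: dist_norm)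
    also have "\<dots> < e" using y(2) assms(3) by (simp add: field_simps)
    finally have "inverse c *\<^sub>R y \<in> K" using ball subspace_scale[OF assms(2) y(1)] by blast
    then have "c *\<^sub>R (inverse c *\<^sub>R y) \<in> K"
      using assms(1,3) unfolding cone_def by (meson less_imp_le)
    then show "y \<in> K" using assms(3) by simp
  qed
  moreover have "c *\<^sub>R v \<in> K" using assms(1,3) vK unfolding cone_def by simp
  ultimately show ?thesis unfolding int_in_def using assms(3) e by (auto intro!: exI[of _ "c * e"])
qed

lemma uminus_int_in_subset:
  fixes K W :: "'a::real_normed_vector set"
  assumes "subspace W"
  shows "uminus ` int_in W K \<subseteq> int_in W (uminus ` K)"
proof clarify
  fix v assume "v \<in> int_in W K"
  then obtain e where "v \<in> K" "e > 0" and ball: "\<forall>y\<in>W. dist y v < e \<longrightarrow> y \<in> K"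
    unfolding int_in_def by auto
  moreover have "y \<in> uminus ` K" if "y \<in> W" "dist y (- v) < e" for y
    using ball subspace_neg[OF assms that(1)] that(2) dist_minus[of y "- v"]
    by (auto intro!: image_eqI[of y uminus "- y"])
  ultimately show "- v \<in> int_in W (uminus ` K)" unfolding int_in_def by auto
qed

lemma int_in_uminus:
  fixes K W :: "'a::real_normed_vector set"
  assumes "subspace W"
  shows "int_in W (uminus ` K) = uminus ` int_in W K"
proof
  show "uminus ` int_in W K \<subseteq> int_in W (uminus ` K)" by (rule uminus_int_in_subset[OF assms])
  have "uminus ` int_in W (uminus ` K) \<subseteq> int_in W K"
    using uminus_int_in_subset[OF assms, of "uminus ` K"] by (simp add: image_image)
  then show "int_in W (uminus ` K) \<subseteq> uminus ` int_in W K"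
    by (auto intro!: image_eqI[of _ uminus])
qed

lemma zero_notin_int_in:
  fixes K W :: "'a::real_normed_vector set"
  assumes "K \<inter> uminus ` K \<subseteq> {0}" "subspace W" "u \<in> W" "u \<noteq> 0"
  shows "0 \<notin> int_in W K"
proof
  assume "0 \<in> int_in W K"
  then obtain e where e: "e > 0" "\<forall>y\<in>W. dist y 0 < e \<longrightarrow> y \<in> K" unfolding int_in_def by auto
  define y where "y = (e / (2 * norm u)) *\<^sub>R u"
  have "norm y = e / 2" unfolding y_def using assms(4) e(1) by simp
  moreover have "y \<in> W" "- y \<in> W" unfolding y_def using assms(2,3) by (auto intro: subspace_scale subspace_neg)
  ultimately have "y \<in> K" "- y \<in> K" using e by auto
  then have "y \<in> K \<inter> uminus ` K" by (auto intro!: image_eqI[of y uminus "- y"])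
  with assms(1) \<open>norm y = e / 2\<close> e(1) show False by auto
qed

lemma int_in_two_sided_scale:
  fixes K W :: "'a::real_normed_vector set"
  assumes "cone K" "subspace W" "\<beta> \<noteq> 0" "w \<in> int_in W K \<union> int_in W (uminus ` K)"
  shows "\<beta> *\<^sub>R w \<in> int_in W K \<union> int_in W (uminus ` K)"
proof -
  have scale: "\<gamma> *\<^sub>R v \<in> int_in W K \<union> int_in W (uminus ` K)" if "\<gamma> \<noteq> 0" "v \<in> int_in W K" for \<gamma> v
  proof (cases "\<gamma> > 0")
    case True then show ?thesis using int_in_scale[OF assms(1,2) _ that(2)] by blast
  next
    case False
    then have "0 < - \<gamma>" using that(1) by linarith
    then have "(- \<gamma>) *\<^sub>R v \<in> int_in W K" by (rule int_in_scale[OF assms(1,2) _ that(2)])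
    then have "- ((- \<gamma>) *\<^sub>R v) \<in> int_in W (uminus ` K)" unfolding int_in_uminus[OF assms(2)] by blast
    then show ?thesis by simp
  qed
  from assms(4) have "w \<in> int_in W K \<or> - w \<in> int_in W K"
    unfolding int_in_uminus[OF assms(2)] by force
  then show ?thesis
  proof
    assume "w \<in> int_in W K"
    then show ?thesis using scale assms(3) by blast
  next
    assume "- w \<in> int_in W K"
    then show ?thesis using scale[of "- \<beta>" "- w"] assms(3) by simp
  qed
qed

lemma mem_closure_if_ray_mem:
  fixes v u :: "'a::real_normed_vector"
  assumes "0 < \<epsilon>" "\<And>t. 0 < t \<Longrightarrow> t < \<epsilon> \<Longrightarrow> v + t *\<^sub>R u \<in> S"
  shows "v \<in> closure S"
  unfolding closure_approachable
proof (intro allI impI)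
  fix e :: real assume e: "e > 0"
  define t where "t = min (\<epsilon> / 2) (e / (2 * (norm u + 1)))"
  have norm_pos: "norm u + 1 > 0" by (simp add: add_nonneg_pos)
  have t: "0 < t" "t < \<epsilon>" unfolding t_def using assms(1) e norm_pos by auto
  have "dist (v + t *\<^sub>R u) v = t * norm u" using t by (simp add: dist_norm)
  also have "\<dots> \<le> e / (2 * (norm u + 1)) * (norm u + 1)"
    using t by (intro mult_mono) (auto simp: t_def)
  also have "\<dots> = e / 2" using norm_pos by (simp add: field_split_simps)
  also have "\<dots> < e" using e by simp
  finally show "\<exists>y\<in>S. dist y v < e" using assms(2)[OF t] by blast
qed

lemma closure_scaleR_mem:
  fixes S :: "'a::real_normed_vector set"
  assumes "\<And>y \<alpha>. y \<in> S \<Longrightarrow> \<alpha> \<noteq> 0 \<Longrightarrow> \<alpha> *\<^sub>R y \<in> S" "S \<noteq> {}" "v \<in> closure S"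
  shows "\<alpha> *\<^sub>R v \<in> closure S"
proof (cases "\<alpha> = 0")
  case False
  have "(*\<^sub>R) \<alpha> ` S \<subseteq> S" using assms(1) False by auto
  then have "closure ((*\<^sub>R) \<alpha> ` S) \<subseteq> closure S" by (rule closure_mono)
  then show ?thesis using assms(3) unfolding closure_scaleR[symmetric] by blast
next
  case True
  obtain y where "y \<in> S" using assms(2) by auto
  then have "0 \<in> closure S"
    using mem_closure_if_ray_mem[of 1 0 y S] assms(1) by simp
  then show ?thesis using True by simp
qed

definition T_core ::
  "nat \<Rightarrow> (real^('n::{finite,linorder} set)) set \<Rightarrow> (real^'n::{finite,linorder}) set" where
  "T_core j K = {x1. \<exists>x. x 0 = x1 \<and>
      wedge j x \<in> int_in (ext_power j) K \<union> int_in (ext_power j) (uminus ` K)}"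

lemma T_set_eq_closure_T_core: "T_set j K = closure (T_core j K)"
  unfolding T_set_def T_core_def ..

lemma first_factor_in_T_core:
  "wedge j x \<in> int_in (ext_power j) K \<union> int_in (ext_power j) (uminus ` K) \<Longrightarrow> x 0 \<in> T_core j K"
  unfolding T_core_def by blast

lemma T_core_scaleR:
  assumes "cone K" "0 < j" "v \<in> T_core j K" "\<alpha> \<noteq> 0"
  shows "\<alpha> *\<^sub>R v \<in> T_core j K"
proof -
  obtain x where x: "x 0 = v" "wedge j x \<in> int_in (ext_power j) K \<union> int_in (ext_power j) (uminus ` K)"
    using assms(3) unfolding T_core_def by auto
  have "wedge j (x(0 := \<alpha> *\<^sub>R x 0)) = \<alpha> *\<^sub>R wedge j x" by (rule wedge_update_scale[OF assms(2)])
  then have "wedge j (x(0 := \<alpha> *\<^sub>R x 0)) \<in> int_in (ext_power j) K \<union> int_in (ext_power j) (uminus ` K)"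
    using int_in_two_sided_scale[OF assms(1) subspace_ext_power assms(4) x(2)] by simp
  from first_factor_in_T_core[OF this] show ?thesis using x(1) by simp
qed

lemma closed_T_set: "closed (T_set j K)"
  unfolding T_set_eq_closure_T_core by simp

lemma T_set_scaleR:
  assumes "cone K" "0 < j" "T_set j K \<noteq> {}" "v \<in> T_set j K"
  shows "\<alpha> *\<^sub>R v \<in> T_set j K"
  using assms unfolding T_set_eq_closure_T_core
  by (intro closure_scaleR_mem[of "T_core j K"] T_core_scaleR) auto

lemma span_image_lessThan_lincomb:
  fixes x :: "nat \<Rightarrow> 'a::real_vector"
  assumes "v \<in> span (x ` {..<j})"
  obtains d where "v = (\<Sum>i<j. d i *\<^sub>R x i)"
proof -
  from assms have "\<exists>d. v = (\<Sum>i<j. d i *\<^sub>R x i)"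
  proof (induction rule: span_induct_alt)
    case base
    show ?case by (intro exI[of _ "\<lambda>_. 0"]) simp
  next
    case (step c y v)
    then obtain k d where "k < j" "y = x k" "v = (\<Sum>i<j. d i *\<^sub>R x i)" by auto
    then have "c *\<^sub>R y + v = (\<Sum>i<j. (d i + (if i = k then c else 0)) *\<^sub>R x i)"
      by (simp add: scaleR_add_left sum.distrib if_distrib[of "\<lambda>c. c *\<^sub>R _"] cong: if_cong)
    then show ?case by (intro exI[of _ "\<lambda>i. d i + (if i = k then c else 0)"])
  qed
  then show ?thesis using that by blast
qed

text \<open>Replacing \<open>x\<^sub>0\<close> by \<open>\<Sum> d\<^sub>i x\<^sub>i\<close> with \<open>d\<^sub>0 \<noteq> 0\<close> keeps the wedge inside the interior, up to the
  factor \<open>d\<^sub>0\<close>; the remaining vectors of the span are limits of such combinations.\<close>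
lemma span_factors_subset_T_set:
  assumes cone: "cone K" and "0 < j"
    and x: "wedge j x \<in> int_in (ext_power j) K \<union> int_in (ext_power j) (uminus ` K)"
  shows "span (x ` {..<j}) \<subseteq> T_set j K"
proof
  have in_core: "(\<Sum>i<j. d i *\<^sub>R x i) \<in> T_core j K" if "d 0 \<noteq> 0" for d
  proof -
    have "wedge j (x(0 := \<Sum>i<j. d i *\<^sub>R x i)) \<in> int_in (ext_power j) K \<union> int_in (ext_power j) (uminus ` K)"
      using wedge_update_lincomb[OF \<open>0 < j\<close>, of x d]
        int_in_two_sided_scale[OF cone subspace_ext_power that x] by simp
    from first_factor_in_T_core[OF this] show ?thesis by simp
  qed
  fix v assume "v \<in> span (x ` {..<j})"
  then obtain d where v: "v = (\<Sum>i<j. d i *\<^sub>R x i)" by (rule span_image_lessThan_lincomb)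
  define \<epsilon> where "\<epsilon> = (if d 0 < 0 then - d 0 else 1)"
  have "v + t *\<^sub>R x 0 \<in> T_core j K" if "0 < t" "t < \<epsilon>" for t
  proof -
    have "v + t *\<^sub>R x 0 = (\<Sum>i<j. (d i + (if i = 0 then t else 0)) *\<^sub>R x i)"
      using \<open>0 < j\<close> by (simp add: v scaleR_add_left sum.distrib if_distrib[of "\<lambda>c. c *\<^sub>R _"] cong: if_cong)
    moreover have "d 0 + t \<noteq> 0" using that unfolding \<epsilon>_def by (auto split: if_splits)
    ultimately show ?thesis using in_core[of "\<lambda>i. d i + (if i = 0 then t else 0)"] by simp
  qed
  moreover have "0 < \<epsilon>" unfolding \<epsilon>_def by simp
  ultimately show "v \<in> T_set j K"
    unfolding T_set_eq_closure_T_core by (intro mem_closure_if_ray_mem[of \<epsilon>])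
qed

lemma wedge_nonzero_if_int_in:
  fixes K :: "(real^('n::{finite,linorder} set)) set"
  assumes "K \<inter> uminus ` K \<subseteq> {0}" "j \<le> CARD('n)"
    and "wedge j x \<in> int_in (ext_power j) K \<union> int_in (ext_power j) (uminus ` K)"
  shows "wedge j x \<noteq> 0"
proof -
  obtain y :: "nat \<Rightarrow> real^'n::{finite,linorder}" where "wedge j y \<noteq> 0"
    using exists_wedge_nonzero[OF assms(2)] .
  then have "0 \<notin> int_in (ext_power j) K"
    by (rule zero_notin_int_in[OF assms(1) subspace_ext_power wedge_in_ext_power])
  then show ?thesis using assms(3) unfolding int_in_uminus[OF subspace_ext_power] by force
qed

lemma exists_subspace_T_set:
  fixes K :: "(real^('n::{finite,linorder} set)) set"
  assumes "cone K" "K \<inter> uminus ` K \<subseteq> {0}" "0 < j" "j \<le> CARD('n)" "T_set j K \<noteq> {}"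
  obtains L where "subspace L" "dim L = j" "L \<subseteq> T_set j K"
proof -
  obtain x where x: "wedge j x \<in> int_in (ext_power j) K \<union> int_in (ext_power j) (uminus ` K)"
    using assms(5) unfolding T_set_eq_closure_T_core T_core_def by auto
  show ?thesis
    using that[OF subspace_span dim_span_if_wedge_nonzero[OF wedge_nonzero_if_int_in[OF assms(2,4) x]]
        span_factors_subset_T_set[OF assms(1,3) x]] .
qed

section \<open>Coordinates with respect to a basis\<close>

definition basis_coord :: "('n::finite \<Rightarrow> real^'n) \<Rightarrow> 'n \<Rightarrow> real^'n \<Rightarrow> real" where
  "basis_coord e k v = representation (range e) v (e k)"

lemma span_basis:
  fixes e :: "'n::finite \<Rightarrow> real^'n"
  assumes "is_basis e"
  shows "span (range e) = UNIV"
proof -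
  have ind: "independent (range e)" and inj: "inj e" using assms unfolding is_basis_def by auto
  have "dim (UNIV :: (real^'n) set) \<le> card (range e)"
    using card_image[OF inj] dim_subset_UNIV_cart[of UNIV] by simp
  then show ?thesis using card_ge_dim_independent[OF _ ind] by blast
qed

lemma bounded_linear_basis_coord:
  assumes "is_basis e"
  shows "bounded_linear (basis_coord e k)"
  unfolding basis_coord_def[abs_def]
  using bounded_linear_representation[of "range e" "e k"] span_basis[OF assms] assms
  by (simp add: is_basis_def)

lemma linear_basis_coord: "is_basis e \<Longrightarrow> linear (basis_coord e k)"
  using bounded_linear_basis_coord bounded_linear.linear by blast

lemma basis_coord_basis:
  assumes "is_basis e"
  shows "basis_coord e k (e l) = (if k = l then 1 else 0)"
proof -
  have "independent (range e)" and inj: "inj e" using assms unfolding is_basis_def by auto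
  then have "representation (range e) (e l) = (\<lambda>v. if v = e l then 1 else 0)"
    by (intro representation_basis) simp_all
  then show ?thesis unfolding basis_coord_def using inj by (auto dest: injD)
qed

lemma basis_coord_eq_sum_axis:
  assumes "is_basis e"
  shows "basis_coord e k v = (\<Sum>m\<in>UNIV. v $ m * basis_coord e k (axis m 1))"
proof -
  have lin: "linear (basis_coord e k)" by (rule linear_basis_coord[OF assms])
  have "v = (\<Sum>m\<in>UNIV. v $ m *\<^sub>R axis m 1)"
    using basis_expansion[of v] unfolding scalar_mult_eq_scaleR by simp
  then have "basis_coord e k v = basis_coord e k (\<Sum>m\<in>UNIV. v $ m *\<^sub>R axis m 1)" by simp
  also have "\<dots> = (\<Sum>m\<in>UNIV. v $ m * basis_coord e k (axis m 1))"
    by (simp add: linear_sum[OF lin] linear_scale[OF lin])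
  finally show ?thesis .
qed

text \<open>The coefficient of \<open>e\<^sub>I = e\<^sub>i\<^sub>1 \<and> \<dots> \<and> e\<^sub>i\<^sub>j\<close> in a j-vector given by its Pluecker coordinates.\<close>
definition wedge_coord ::
  "('n::{finite,linorder} \<Rightarrow> real^'n::{finite,linorder}) \<Rightarrow> nat \<Rightarrow> 'n set \<Rightarrow>
    real^('n::{finite,linorder} set) \<Rightarrow> real" where
  "wedge_coord e j I w = (\<Sum>I' | card I' = j.
      w $ I' * det_nat j (\<lambda>a b. basis_coord e (slist I ! b) (axis (slist I' ! a) 1)))"

lemma linear_wedge_coord: "linear (wedge_coord e j I)"
  by (rule linearI) (simp_all add: wedge_coord_def sum.distrib sum_distrib_left algebra_simps)

lemma wedge_coord_wedge:
  assumes "is_basis e"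
  shows "wedge_coord e j I (wedge j x) = det_nat j (\<lambda>b a. basis_coord e (slist I ! a) (x b))"
proof -
  have "det_nat j (\<lambda>b a. basis_coord e (slist I ! a) (x b))
      = det_nat j (\<lambda>b a. \<Sum>m\<in>UNIV. x b $ m * basis_coord e (slist I ! a) (axis m 1))"
    by (rule det_nat_cong) (rule basis_coord_eq_sum_axis[OF assms])
  also have "\<dots> = (\<Sum>I' | card I' = j. det_nat j (\<lambda>b a'. x b $ (slist I' ! a'))
        * det_nat j (\<lambda>a' a. basis_coord e (slist I ! a) (axis (slist I' ! a') 1)))"
    by (rule cauchy_binet_det_nat)
  also have "\<dots> = wedge_coord e j I (wedge j x)"
    unfolding wedge_coord_def by (rule sum.cong) (auto simp: wedge_component)
  finally show ?thesis by simp
qed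

lemma det_nat_sorted_list_indicator:
  fixes I I' :: "'n::{finite,linorder} set"
  assumes "card I = j" "card I' = j"
  shows "det_nat j (\<lambda>b a. if slist I ! a = slist I' ! b then 1 else 0) = (if I = I' then 1 else 0)"
proof (cases "I = I'")
  case True
  have "det_nat j (\<lambda>b a. if slist I ! a = slist I' ! b then 1 else 0) = det_nat j (\<lambda>a b. if a = b then 1 else 0)"
    using assms(2) True by (intro det_nat_cong) (auto simp: nth_eq_iff_index_eq)
  then show ?thesis using True det_nat_one by simp
next
  case False
  then have "\<not> I' \<subseteq> I" using card_subset_eq[of I I'] assms by auto
  then obtain y where "y \<in> I'" "y \<notin> I" by auto
  then obtain b where b: "b < j" "slist I' ! b \<notin> I"
    using assms(2) by (metis finite in_set_conv_nth set_sorted_list_of_set length_sorted_list_of_set)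
  have "det_nat j (\<lambda>b a. if slist I ! a = slist I' ! b then 1 else 0) = 0"
  proof (rule det_nat_zero_row[OF b(1)])
    fix a assume "a < j"
    then have "slist I ! a \<in> I" using assms(1) by (simp add: nth_sorted_list_of_set_mem)
    then show "(if slist I ! a = slist I' ! b then 1 else 0) = (0::real)" using b by auto
  qed
  then show ?thesis using False by simp
qed

lemma wedge_coord_basic_wedge:
  assumes "is_basis e" "card I = j" "card I' = j"
  shows "wedge_coord e j I (wedge j (\<lambda>a. e (slist I' ! a))) = (if I = I' then 1 else 0)"
  unfolding wedge_coord_wedge[OF assms(1)] basis_coord_basis[OF assms(1)]
  by (rule det_nat_sorted_list_indicator[OF assms(2,3)])

lemma wedge_coord_sum_basic_wedges:
  assumes "is_basis e" "card I = j"
  shows "wedge_coord e j I (\<Sum>I' | card I' = j. c I' *\<^sub>R wedge j (\<lambda>a. e (slist I' ! a))) = c I"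
  using assms(2)
  by (simp add: linear_sum[OF linear_wedge_coord] linear_scale[OF linear_wedge_coord]
      wedge_coord_basic_wedge[OF assms] if_distrib[of "(*) _"] cong: if_cong)

section \<open>Sign restrictions on \<open>T(K)\<close>\<close>

lemma nth_remove1_distinct:
  assumes "distinct l" "a < length l" "a' < length l - 1"
  shows "remove1 (l ! a) l ! a' = l ! (if a' < a then a' else Suc a')"
proof -
  have "l ! a \<notin> set (take a l)"
    using assms(1,2) by (auto simp: in_set_conv_nth nth_eq_iff_index_eq)
  then have "remove1 (l ! a) l = take a l @ drop (Suc a) l"
    by (subst id_take_nth_drop[OF assms(2)], simp only: remove1_append if_False) simp
  then show ?thesis using assms(2,3) by (auto simp: nth_append min_def)
qed

text \<open>Expansion along the first row of a (j+1)-minor of the coordinate matrix of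
  \<open>x\<^sub>0, x\<^sub>0, x\<^sub>1, \<dots>, x\<^sub>j\<^sub>-\<^sub>1\<close>, which vanishes because of the repeated row.\<close>
lemma laplace_relation_wedge_coords:
  assumes e: "is_basis e" and "1 \<le> j" and J: "card J = Suc j"
  shows "(\<Sum>i<Suc j. (-1) ^ i * basis_coord e (slist J ! i) (x 0)
            * wedge_coord e j (J - {slist J ! i}) (wedge j x)) = 0"
proof -
  define l where "l = slist J"
  have l: "length l = Suc j" "distinct l" using J unfolding l_def by auto
  define u where "u b = (if b = 0 then x 0 else x (b - 1))" for b
  have "(\<Sum>i<Suc j. (-1) ^ i * basis_coord e (l ! i) (x 0) * wedge_coord e j (J - {l ! i}) (wedge j x))
      = det_nat (Suc j) (\<lambda>b i. basis_coord e (l ! i) (u b))"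
    unfolding det_nat_Suc_expand_first_row
  proof (rule sum.cong[OF refl])
    fix i assume i: "i \<in> {..<Suc j}"
    have "det_nat j (\<lambda>b' a'. basis_coord e (l ! (if a' < i then a' else Suc a')) (u (Suc b')))
        = det_nat j (\<lambda>b' a'. basis_coord e (slist (J - {l ! i}) ! a') (x b'))"
    proof (rule det_nat_cong)
      fix b' a' assume "a' < j"
      have "slist (J - {l ! i}) ! a' = remove1 (l ! i) l ! a'"
        unfolding l_def by (simp add: sorted_list_of_set_remove)
      also have "\<dots> = l ! (if a' < i then a' else Suc a')"
        by (rule nth_remove1_distinct) (use l i \<open>a' < j\<close> in auto)
      finally show "basis_coord e (l ! (if a' < i then a' else Suc a')) (u (Suc b'))
          = basis_coord e (slist (J - {l ! i}) ! a') (x b')"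
        by (simp add: u_def)
    qed
    then show "(-1) ^ i * basis_coord e (l ! i) (x 0) * wedge_coord e j (J - {l ! i}) (wedge j x)
        = (-1) ^ i * basis_coord e (l ! i) (u 0)
          * det_nat j (\<lambda>b' a'. basis_coord e (l ! (if a' < i then a' else Suc a')) (u (Suc b')))"
      by (simp add: wedge_coord_wedge[OF e] u_def)
  qed
  also have "\<dots> = 0"
    by (rule det_nat_identical_rows[of 0 1]) (use \<open>1 \<le> j\<close> in \<open>auto simp: u_def\<close>)
  finally show ?thesis unfolding l_def .
qed

text \<open>Moving \<open>w\<close> slightly in the direction \<open>-\<sigma>\<^sub>I e\<^sub>I\<close> stays inside \<open>K \<subseteq> K'\<close>, where the coefficient
  at \<open>I\<close> is still nonnegative.\<close>
lemma int_in_basic_cone_coord_pos: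
  fixes K :: "(real^('n::{finite,linorder} set)) set"
  assumes e: "is_basis e" and s: "\<forall>I. s I \<in> {1, -1}"
    and KK': "K \<subseteq> ext_basic_cone j e s" and KW: "K \<subseteq> ext_power j"
    and w: "w \<in> int_in (ext_power j) K" and I: "card I = j"
  shows "0 < s I * wedge_coord e j I w"
proof -
  define E where "E I' = wedge j (\<lambda>a. e (slist I' ! a))" for I' :: "'n set"
  obtain \<epsilon> where "w \<in> K" "\<epsilon> > 0" and ball: "\<forall>y\<in>ext_power j. dist y w < \<epsilon> \<longrightarrow> y \<in> K"
    using w unfolding int_in_def by auto
  have norm_pos: "0 < norm (E I) + 1" by (simp add: add_nonneg_pos)
  define d where "d = \<epsilon> / (norm (E I) + 1)"
  have d: "0 < d" unfolding d_def using \<open>\<epsilon> > 0\<close> norm_pos by simp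
  have "dist (w - (d * s I) *\<^sub>R E I) w = d * norm (E I)"
    using d s[rule_format, of I] by (auto simp: dist_norm abs_mult)
  also have "\<dots> < d * (norm (E I) + 1)" using d by simp
  also have "\<dots> = \<epsilon>" unfolding d_def using norm_pos by simp
  finally have "w - (d * s I) *\<^sub>R E I \<in> K"
    using ball \<open>w \<in> K\<close> KW unfolding E_def
    by (meson subset_iff subspace_diff subspace_scale subspace_ext_power wedge_in_ext_power)
  then obtain c where c: "\<forall>I'. 0 \<le> c I'"
    "w - (d * s I) *\<^sub>R E I = (\<Sum>I' | card I' = j. (c I' * s I') *\<^sub>R E I')"
    using KK' unfolding ext_basic_cone_def E_def by (auto simp: scaleR_scaleR)
  have "wedge_coord e j I w - d * s I = c I * s I"
    using arg_cong[OF c(2), of "wedge_coord e j I"] wedge_coord_basic_wedge[OF e I I]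
      wedge_coord_sum_basic_wedges[OF e I]
    by (simp add: linear_diff[OF linear_wedge_coord] linear_scale[OF linear_wedge_coord] E_def)
  then have "s I * wedge_coord e j I w = c I + d"
    using s[rule_format, of I] by (auto simp: algebra_simps)
  then show ?thesis using c(1) d by (simp add: add_nonneg_pos)
qed

definition sign_mixed :: "(nat \<Rightarrow> 'a \<Rightarrow> real) \<Rightarrow> nat \<Rightarrow> 'a set" where
  "sign_mixed f N = {v. (\<exists>i<N. f i v \<le> 0) \<and> (\<exists>i<N. 0 \<le> f i v)}"

lemma closed_sign_mixed:
  assumes "\<And>i. continuous_on UNIV (f i)"
  shows "closed (sign_mixed f N)"
proof -
  have "sign_mixed f N = (\<Union>i<N. {v. f i v \<le> 0}) \<inter> (\<Union>i<N. {v. 0 \<le> f i v})"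
    unfolding sign_mixed_def by auto
  then show ?thesis
    by (simp add: closed_Int closed_UN closed_Collect_le assms continuous_on_const)
qed

lemma sign_mixed_if_weighted_sum_eq_0:
  assumes "(\<Sum>i<N. f i v * p i) = 0" "\<forall>i<N. 0 < p i" "0 < N"
  shows "v \<in> sign_mixed f N"
proof -
  have "\<not> (\<forall>i<N. 0 < f i v)"
  proof
    assume "\<forall>i<N. 0 < f i v"
    then have "0 < (\<Sum>i<N. f i v * p i)" using assms(2,3) by (intro sum_pos) auto
    with assms(1) show False by simp
  qed
  moreover have "\<not> (\<forall>i<N. f i v < 0)"
  proof
    assume "\<forall>i<N. f i v < 0"
    then have "0 < (\<Sum>i<N. - f i v * p i)" using assms(2,3) by (intro sum_pos) (auto simp: mult_neg_pos)
    with assms(1) show False by (simp add: sum_negf)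
  qed
  ultimately show ?thesis unfolding sign_mixed_def by (auto simp: not_less)
qed

abbreviation J_sign_coords ::
  "('n::{finite,linorder} \<Rightarrow> real^'n::{finite,linorder}) \<Rightarrow> ('n set \<Rightarrow> real) \<Rightarrow> 'n set \<Rightarrow> nat \<Rightarrow>
    real^'n::{finite,linorder} \<Rightarrow> real" where
  "J_sign_coords e s J i v \<equiv> (-1) ^ i * s (J - {slist J ! i}) * basis_coord e (slist J ! i) v"

lemma T_core_subset_sign_mixed:
  fixes K :: "(real^('n::{finite,linorder} set)) set"
  assumes e: "is_basis e" and s: "\<forall>I. s I \<in> {1, -1}"
    and KK': "K \<subseteq> ext_basic_cone j e s" and KW: "K \<subseteq> ext_power j"
    and "1 \<le> j" and J: "card J = Suc j"
  shows "T_core j K \<subseteq> sign_mixed (J_sign_coords e s J) (Suc j)"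
proof
  fix v assume "v \<in> T_core j K"
  then obtain x where x: "x 0 = v"
    "wedge j x \<in> int_in (ext_power j) K \<union> int_in (ext_power j) (uminus ` K)"
    unfolding T_core_def by auto
  define p where "p i = s (J - {slist J ! i}) * wedge_coord e j (J - {slist J ! i}) (wedge j x)" for i
  have card_minor: "card (J - {slist J ! i}) = j" if "i < Suc j" for i
  proof -
    have "slist J ! i \<in> J" using that J by (simp add: nth_sorted_list_of_set_mem)
    then show ?thesis using J by simp
  qed
  have p_sign: "(\<forall>i<Suc j. 0 < p i) \<or> (\<forall>i<Suc j. 0 < - p i)"
  proof (cases "wedge j x \<in> int_in (ext_power j) K")
    case True
    then show ?thesis
      using int_in_basic_cone_coord_pos[OF e s KK' KW _ card_minor] unfolding p_def by blast
  next
    case False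
    then have neg: "- wedge j x \<in> int_in (ext_power j) K"
      using x(2) unfolding int_in_uminus[OF subspace_ext_power] by force
    have "0 < - p i" if "i < Suc j" for i
      using int_in_basic_cone_coord_pos[OF e s KK' KW neg card_minor[OF that]]
      unfolding p_def by (simp add: linear_neg[OF linear_wedge_coord])
    then show ?thesis by blast
  qed
  have s_sq: "s I * s I = 1" for I using s[rule_format, of I] by auto
  have "(\<Sum>i<Suc j. J_sign_coords e s J i v * p i)
      = (\<Sum>i<Suc j. (-1) ^ i * basis_coord e (slist J ! i) (x 0)
           * wedge_coord e j (J - {slist J ! i}) (wedge j x))"
    unfolding p_def x(1)[symmetric] by (intro sum.cong refl) (simp add: mult_ac s_sq)
  also have "\<dots> = 0" by (rule laplace_relation_wedge_coords[OF e \<open>1 \<le> j\<close> J])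
  finally have rel: "(\<Sum>i<Suc j. J_sign_coords e s J i v * p i) = 0" .
  then have rel_neg: "(\<Sum>i<Suc j. J_sign_coords e s J i v * - p i) = 0" by (simp add: sum_negf)
  from p_sign show "v \<in> sign_mixed (J_sign_coords e s J) (Suc j)"
    using sign_mixed_if_weighted_sum_eq_0[where f = "J_sign_coords e s J", OF rel]
      sign_mixed_if_weighted_sum_eq_0[where f = "J_sign_coords e s J", OF rel_neg] by auto
qed

lemma T_set_subset_sign_mixed:
  fixes K :: "(real^('n::{finite,linorder} set)) set"
  assumes e: "is_basis e" and "\<forall>I. s I \<in> {1, -1}"
    and "K \<subseteq> ext_basic_cone j e s" "K \<subseteq> ext_power j" "1 \<le> j" "card J = Suc j"
  shows "T_set j K \<subseteq> sign_mixed (J_sign_coords e s J) (Suc j)"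
  unfolding T_set_eq_closure_T_core
proof (rule closure_minimal)
  show "closed (sign_mixed (J_sign_coords e s J) (Suc j))"
    using bounded_linear.continuous_on[OF bounded_linear_basis_coord[OF e] continuous_on_id]
    by (intro closed_sign_mixed continuous_on_mult continuous_on_const) simp
qed (rule T_core_subset_sign_mixed[OF assms])

section \<open>Subspaces of \<open>T(K)\<close>\<close>

lemma extend_independent_by_basis_vectors:
  fixes e :: "'n::finite \<Rightarrow> real^'n"
  assumes e: "is_basis e" and S: "independent S"
  obtains M where "span (S \<union> e ` M) = UNIV" "card M + card S = CARD('n)"
proof -
  have inj: "inj e" using e unfolding is_basis_def by simp
  obtain B where B: "S \<subseteq> B" "B \<subseteq> S \<union> range e" "independent B" "S \<union> range e \<subseteq> span B"
    using maximal_independent_subset_extend[of S "S \<union> range e"] S by blast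
  have "span (range e) \<subseteq> span B" using B(4) by (simp add: span_minimal)
  then have span_B: "span B = UNIV" using span_basis[OF e] by auto
  have card_B: "card B = CARD('n)"
    using dim_span_eq_card_independent[OF B(3)] span_B dim_UNIV[where 'a = "real^'n"] by simp
  define M where "M = {k. e k \<in> B - S}"
  have B_minus_S: "B - S = e ` M" using B(2) unfolding M_def by auto
  then have B_split: "B = S \<union> e ` M" using B(1) by auto
  have "card M = card (B - S)"
    unfolding B_minus_S by (rule card_image[symmetric]) (rule inj_on_subset[OF inj subset_UNIV])
  also have "\<dots> = card B - card S"
    using B(1) independent_imp_finite[OF S] by (simp add: card_Diff_subset)
  finally have "card M + card S = CARD('n)"
    using card_mono[OF independent_imp_finite[OF B(3)] B(1)] card_B by simp
  then show ?thesis using that span_B B_split by blast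
qed

lemma basis_coord_sum_sorted_list:
  assumes e: "is_basis e" and "card J = N" "i < N"
  shows "basis_coord e (slist J ! i) (\<Sum>i'<N. g i' *\<^sub>R e (slist J ! i')) = g i"
proof -
  have "basis_coord e (slist J ! i) (\<Sum>i'<N. g i' *\<^sub>R e (slist J ! i'))
      = (\<Sum>i'<N. g i' * (if slist J ! i = slist J ! i' then 1 else 0))"
    by (simp add: linear_sum[OF linear_basis_coord[OF e]] linear_scale[OF linear_basis_coord[OF e]]
        basis_coord_basis[OF e])
  also have "\<dots> = (\<Sum>i'<N. if i' = i then g i' else 0)"
    using assms(2,3) by (intro sum.cong refl) (auto simp: nth_eq_iff_index_eq)
  finally show ?thesis using assms(3) by simp
qed

text \<open>Complete \<open>j+1\<close> independent vectors of \<open>L\<close> by basis vectors \<open>e\<^sub>k\<close>, \<open>k \<in> M\<close>; the coordinates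
  outside \<open>M\<close> then take arbitrary values on \<open>L\<close>.\<close>
lemma exists_coords_surjective_on_subspace:
  fixes e :: "'n::{finite,linorder} \<Rightarrow> real^'n::{finite,linorder}"
  assumes e: "is_basis e" and L: "subspace L" and dim_L: "Suc j \<le> dim L"
  obtains J :: "'n::{finite,linorder} set" where "card J = Suc j"
    "\<And>g. \<exists>z\<in>L. \<forall>i<Suc j. basis_coord e (slist J ! i) z = g i"
proof -
  obtain B where B: "B \<subseteq> L" "independent B" "L \<subseteq> span B" "card B = dim L"
    by (rule basis_exists)
  obtain S where S: "S \<subseteq> B" "card S = Suc j"
    using obtain_subset_with_card_n[of "Suc j" B] dim_L B(4) by metis
  have "independent S" using independent_mono[OF B(2) S(1)] .
  then obtain M where M: "span (S \<union> e ` M) = UNIV" "card M + card S = CARD('n)"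
    by (rule extend_independent_by_basis_vectors[OF e])
  define J where "J = UNIV - M"
  have card_J: "card J = Suc j" unfolding J_def using M(2) S(2) by (simp add: card_Diff_subset)
  have "\<exists>z\<in>L. \<forall>i<Suc j. basis_coord e (slist J ! i) z = g i" for g
  proof -
    define t where "t = (\<Sum>i<Suc j. g i *\<^sub>R e (slist J ! i))"
    obtain z m where t: "t = z + m" "z \<in> span S" "m \<in> span (e ` M)"
      using M(1) unfolding span_Un by blast
    have "z \<in> L" using t(2) span_minimal[of S L] S(1) B(1) L by auto
    moreover have "basis_coord e (slist J ! i) z = g i" if i: "i < Suc j" for i
    proof -
      have "slist J ! i \<in> J" using i card_J by (simp add: nth_sorted_list_of_set_mem)
      then have "basis_coord e (slist J ! i) b = 0" if "b \<in> e ` M" for b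
        using that by (auto simp: basis_coord_basis[OF e] J_def)
      then have "basis_coord e (slist J ! i) m = 0"
        by (rule linear_eq_0_on_span[OF linear_basis_coord[OF e] _ t(3)])
      then show ?thesis
        using basis_coord_sum_sorted_list[OF e card_J i, of g] linear_add[OF linear_basis_coord[OF e]]
        unfolding t_def[symmetric] t(1) by simp
    qed
    ultimately show ?thesis by blast
  qed
  with card_J show ?thesis using that by blast
qed

lemma dim_subspace_T_set_le:
  fixes K :: "(real^('n::{finite,linorder} set)) set"
  assumes e: "is_basis e" and s: "\<forall>I. s I \<in> {1, -1}"
    and KK': "K \<subseteq> ext_basic_cone j e s" and KW: "K \<subseteq> ext_power j" and "1 \<le> j"
    and L: "subspace L" "L \<subseteq> T_set j K"
  shows "dim L \<le> j"
proof (rule ccontr)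
  assume "\<not> dim L \<le> j"
  then have "Suc j \<le> dim L" by simp
  then obtain J :: "'n set" where J: "card J = Suc j"
    and surj: "\<And>g. \<exists>z\<in>L. \<forall>i<Suc j. basis_coord e (slist J ! i) z = g i"
    using exists_coords_surjective_on_subspace[OF e L(1)] by blast
  obtain z where z: "z \<in> L" "\<forall>i<Suc j. basis_coord e (slist J ! i) z = (-1) ^ i * s (J - {slist J ! i})"
    using surj[of "\<lambda>i. (-1) ^ i * s (J - {slist J ! i})"] by blast
  have all_one: "J_sign_coords e s J i z = 1" if "i < Suc j" for i
  proof -
    have "(-1::real) ^ i \<in> {1, -1}" by (cases "even i") simp_all
    then have "(-1) ^ i * s (J - {slist J ! i}) \<in> {1, -1}" using s by auto
    moreover have "J_sign_coords e s J i z
        = ((-1) ^ i * s (J - {slist J ! i})) * ((-1) ^ i * s (J - {slist J ! i}))"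
      by (simp only: z(2)[rule_format, OF that])
    ultimately show ?thesis by auto
  qed
  have "z \<in> sign_mixed (J_sign_coords e s J) (Suc j)"
    using T_set_subset_sign_mixed[OF e s KK' KW \<open>1 \<le> j\<close> J] z(1) L(2) by blast
  then obtain i where "i < Suc j" "J_sign_coords e s J i z \<le> 0"
    unfolding sign_mixed_def by blast
  with all_one show False by fastforce
qed

theorem theorem5:
  fixes K :: "(real^('n::{finite,linorder} set)) set" and j :: nat
  assumes "2 \<le> j" and "j \<le> CARD('n)"
    and "proper_cone_in (ext_power j) K"
    and "\<exists>K'. is_ext_basic_cone j K' \<and> K \<subseteq> K'"
    and "T_set j K \<noteq> {}"
  shows "cone_of_rank j (T_set j K)"
proof -
  have KW: "K \<subseteq> ext_power j" and cone: "cone K" and pointed: "K \<inter> uminus ` K \<subseteq> {0}"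
    using assms(3) unfolding proper_cone_in_def by auto
  obtain e s where e: "is_basis e" and s: "\<forall>I. s I \<in> {1, -1}" and KK': "K \<subseteq> ext_basic_cone j e s"
    using assms(4) unfolding is_ext_basic_cone_def by blast
  have "0 < j" "1 \<le> j" using assms(1) by auto
  obtain L where "subspace L" "dim L = j" "L \<subseteq> T_set j K"
    using exists_subspace_T_set[OF cone pointed \<open>0 < j\<close> assms(2,5)] .
  then show ?thesis
    unfolding cone_of_rank_def
    using closed_T_set T_set_scaleR[OF cone \<open>0 < j\<close> assms(5)]
      dim_subspace_T_set_le[OF e s KK' KW \<open>1 \<le> j\<close>] by blast
qed

end
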